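(* Let $\rho\in\mathbb R$ and let $\kappa_{\mathbf a}:\mathbb H_\rho\times\mathbb H_\rho\to\mathbb C$ be a positive semi-definite Dirichlet series kernel with associated reproducing kernel Hilbert space $\mathscr H_{\mathbf a}$. Then $\mathscr H_{\mathbf a,\infty}:=\{f\in\mathscr H_{\mathbf a}:\lim_{s\to\infty}f(s)=0\}$ is a closed subspace of $\mathscr H_{\mathbf a}$. If $\lim_{t\to\infty}\lim_{r\to\infty}\kappa_{\mathbf a}(t,r)\ne0$, then the reproducing kernel $\kappa_{\mathbf a,\infty}$ of $\mathscr H_{\mathbf a,\infty}$ is $$\kappa_{\mathbf a,\infty}(s,u)=\kappa_{\mathbf a}(s,u)-\frac{\lim_{r\to\infty}\kappa_{\mathbf a}(s,r)\,\lim_{t\to\infty}\kappa_{\mathbf a}(t,u)}{\lim_{t\to\infty}\lim_{r\to\infty}\kappa_{\mathbf a}(t,r)},\quad s,u\in\mathbb H_\rho.$$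
   Context: $\mathbb H_\rho=\{\Re s>\rho\}$. Limits $s,t,r\to\infty$ are taken along the positive real axis. $\kappa_{\mathbf a}(s,u)=\sum_{m,n\ge1}a_{m,n}m^{-s}n^{-\bar u}$ is a Dirichlet series kernel on $\mathbb H_\rho$ if $(s,u)\mapsto\kappa_{\mathbf a}(s,\bar u)$ is regularly convergent on $\mathbb H_\rho\times\mathbb H_\rho$ (the double series converges at each point and every row and column series converges there). $\mathscr H_{\mathbf a}$ is the Hilbert space of functions on $\mathbb H_\rho$ with $\kappa_{\mathbf a}(\cdot,t)\in\mathscr H_{\mathbf a}$ and $\langle f,\kappa_{\mathbf a}(\cdot,t)\rangle=f(t)$. *)

theory Defs
  imports "HOL-Analysis.Analysis"
begin

definition halfplane :: "real \<Rightarrow> complex set" where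
  "halfplane \<rho> = {s. Re s > \<rho>}"

definition dpsum :: "(nat \<Rightarrow> nat \<Rightarrow> complex) \<Rightarrow> complex \<Rightarrow> complex \<Rightarrow> nat \<times> nat \<Rightarrow> complex" where
  "dpsum a s u = (\<lambda>(M, N). \<Sum>m=1..M. \<Sum>n=1..N. a m n * of_nat m powr (-s) * of_nat n powr (-u))"

definition regularly_convergent_on :: "(nat \<Rightarrow> nat \<Rightarrow> complex) \<Rightarrow> complex set \<Rightarrow> bool" where
  "regularly_convergent_on a D \<longleftrightarrow>
     (\<forall>s\<in>D. \<forall>u\<in>D.
        (\<exists>L. (dpsum a s u \<longlongrightarrow> L) (sequentially \<times>\<^sub>F sequentially)) \<and>
        (\<forall>m\<ge>1. summable (\<lambda>n. a m (Suc n) * of_nat m powr (-s) * of_nat (Suc n) powr (-u))) \<and>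
        (\<forall>n\<ge>1. summable (\<lambda>m. a (Suc m) n * of_nat (Suc m) powr (-s) * of_nat n powr (-u))))"

definition dir_kernel :: "(nat \<Rightarrow> nat \<Rightarrow> complex) \<Rightarrow> complex \<Rightarrow> complex \<Rightarrow> complex" where
  "dir_kernel a s u = Lim (sequentially \<times>\<^sub>F sequentially) (dpsum a s (cnj u))"

definition dirichlet_kernel_on :: "real \<Rightarrow> (nat \<Rightarrow> nat \<Rightarrow> complex) \<Rightarrow> bool" where
  "dirichlet_kernel_on \<rho> a \<longleftrightarrow> regularly_convergent_on a (halfplane \<rho>)"

definition psd_kernel :: "complex set \<Rightarrow> (complex \<Rightarrow> complex \<Rightarrow> complex) \<Rightarrow> bool" where
  "psd_kernel D K \<longleftrightarrow>
     (\<forall>(n::nat) (x::nat \<Rightarrow> complex) (c::nat \<Rightarrow> complex). (\<forall>i<n. x i \<in> D) \<longrightarrow>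
        Im (\<Sum>i<n. \<Sum>j<n. c i * cnj (c j) * K (x i) (x j)) = 0 \<and>
        Re (\<Sum>i<n. \<Sum>j<n. c i * cnj (c j) * K (x i) (x j)) \<ge> 0)"

definition kfun :: "complex set \<Rightarrow> (complex \<Rightarrow> complex \<Rightarrow> complex) \<Rightarrow> complex \<Rightarrow> complex \<Rightarrow> complex" where
  "kfun D K t = (\<lambda>s. if s \<in> D then K s t else 0)"

definition hnorm :: "((complex \<Rightarrow> complex) \<Rightarrow> (complex \<Rightarrow> complex) \<Rightarrow> complex) \<Rightarrow> (complex \<Rightarrow> complex) \<Rightarrow> real" where
  "hnorm ip f = sqrt (Re (ip f f))"

definition rkhs :: "complex set \<Rightarrow> (complex \<Rightarrow> complex \<Rightarrow> complex) \<Rightarrow> (complex \<Rightarrow> complex) set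
      \<Rightarrow> ((complex \<Rightarrow> complex) \<Rightarrow> (complex \<Rightarrow> complex) \<Rightarrow> complex) \<Rightarrow> bool" where
  "rkhs D K H ip \<longleftrightarrow>
     (\<forall>f\<in>H. \<forall>x. x \<notin> D \<longrightarrow> f x = 0) \<and>
     (\<lambda>x. 0) \<in> H \<and>
     (\<forall>f\<in>H. \<forall>g\<in>H. (\<lambda>x. f x + g x) \<in> H) \<and>
     (\<forall>c. \<forall>f\<in>H. (\<lambda>x. c * f x) \<in> H) \<and>
     (\<forall>f\<in>H. \<forall>g\<in>H. \<forall>h\<in>H. ip (\<lambda>x. f x + g x) h = ip f h + ip g h) \<and>
     (\<forall>c. \<forall>f\<in>H. \<forall>g\<in>H. ip (\<lambda>x. c * f x) g = c * ip f g) \<and>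
     (\<forall>f\<in>H. \<forall>g\<in>H. ip g f = cnj (ip f g)) \<and>
     (\<forall>f\<in>H. Im (ip f f) = 0 \<and> Re (ip f f) \<ge> 0) \<and>
     (\<forall>f\<in>H. ip f f = 0 \<longrightarrow> f = (\<lambda>x. 0)) \<and>
     (\<forall>X. (\<forall>n. X n \<in> H) \<and>
          (\<forall>e>0. \<exists>N. \<forall>m\<ge>N. \<forall>n\<ge>N. hnorm ip (\<lambda>x. X m x - X n x) < e) \<longrightarrow>
          (\<exists>f\<in>H. (\<lambda>n. hnorm ip (\<lambda>x. X n x - f x)) \<longlonglongrightarrow> 0)) \<and>
     (\<forall>t\<in>D. kfun D K t \<in> H \<and> (\<forall>f\<in>H. ip f (kfun D K t) = f t))"

definition closed_subspace :: "(complex \<Rightarrow> complex) set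
      \<Rightarrow> ((complex \<Rightarrow> complex) \<Rightarrow> (complex \<Rightarrow> complex) \<Rightarrow> complex) \<Rightarrow> (complex \<Rightarrow> complex) set \<Rightarrow> bool" where
  "closed_subspace H ip M \<longleftrightarrow>
     M \<subseteq> H \<and> (\<lambda>x. 0) \<in> M \<and>
     (\<forall>f\<in>M. \<forall>g\<in>M. (\<lambda>x. f x + g x) \<in> M) \<and>
     (\<forall>c. \<forall>f\<in>M. (\<lambda>x. c * f x) \<in> M) \<and>
     (\<forall>X f. (\<forall>n. X n \<in> M) \<longrightarrow> f \<in> H \<longrightarrow>
        (\<lambda>n. hnorm ip (\<lambda>x. X n x - f x)) \<longlonglongrightarrow> 0 \<longrightarrow> f \<in> M)"

definition is_reproducing_kernel :: "complex set \<Rightarrow> (complex \<Rightarrow> complex) set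
      \<Rightarrow> ((complex \<Rightarrow> complex) \<Rightarrow> (complex \<Rightarrow> complex) \<Rightarrow> complex) \<Rightarrow> (complex \<Rightarrow> complex \<Rightarrow> complex) \<Rightarrow> bool" where
  "is_reproducing_kernel D M ip k \<longleftrightarrow>
     (\<forall>u\<in>D. kfun D k u \<in> M \<and> (\<forall>f\<in>M. ip f (kfun D k u) = f u))"

definition H_inf :: "(complex \<Rightarrow> complex) set \<Rightarrow> (complex \<Rightarrow> complex) set" where
  "H_inf H = {f \<in> H. ((\<lambda>x::real. f (of_real x)) \<longlongrightarrow> 0) at_top}"

definition lim_right :: "(complex \<Rightarrow> complex \<Rightarrow> complex) \<Rightarrow> complex \<Rightarrow> complex" where
  "lim_right K s = Lim at_top (\<lambda>r::real. K s (of_real r))"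

definition lim_left :: "(complex \<Rightarrow> complex \<Rightarrow> complex) \<Rightarrow> complex \<Rightarrow> complex" where
  "lim_left K u = Lim at_top (\<lambda>t::real. K (of_real t) u)"

definition lim_both :: "(complex \<Rightarrow> complex \<Rightarrow> complex) \<Rightarrow> complex" where
  "lim_both K = Lim at_top (\<lambda>t::real. lim_right K (of_real t))"

end

theory Submission
  imports Defs "HOL-Real_Asymp.Real_Asymp"
begin

text \<open>Write k_t = K(., t), so that f(t) = <f, k_t> for f in H. Along the positive real axis the
  Dirichlet kernel K(x, y) tends to a_{1,1} as x and y tend to infinity jointly: regular convergence
  bounds the terms a_{m,n} m^(-s0) n^(-s0) (the rows, the columns and the far corner are bounded
  separately), and every other term of K(x, y) carries the extra factor m^(s0-x) n^(s0-y), which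
  is uniformly small. Hence ||k_x - k_y||^2 = K(x,x) - K(y,x) - K(x,y) + K(y,y) tends to 0, so k_t
  converges in H to some g, and f(t) tends to <f, g>. Thus H_inf is the orthogonal complement of g,
  which is closed, and its reproducing kernel is K(s,u) - g(s) cnj(g(u)) / <g, g>; the three
  limits in the formula are exactly g(s), cnj(g(u)) and <g, g>.\<close>

lemma is_reproducing_kernel_cong:
  assumes "is_reproducing_kernel D M ip k" and "\<And>s u. s \<in> D \<Longrightarrow> u \<in> D \<Longrightarrow> k s u = k' s u"
  shows "is_reproducing_kernel D M ip k'"
proof -
  have "kfun D k u = kfun D k' u" if "u \<in> D" for u
    using assms(2) that by (auto simp: kfun_def)
  then show ?thesis using assms(1) unfolding is_reproducing_kernel_def by simp
qed

lemma tendsto_prod_at_top_zeroE: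
  fixes d :: "'a::linorder \<Rightarrow> 'a \<Rightarrow> real"
  assumes "((\<lambda>(s, t). d s t) \<longlongrightarrow> 0) (at_top \<times>\<^sub>F at_top)" "e > 0"
  obtains T where "\<And>s t. s \<ge> T \<Longrightarrow> t \<ge> T \<Longrightarrow> d s t < e"
proof -
  have "\<forall>\<^sub>F p in at_top \<times>\<^sub>F at_top. d (fst p) (snd p) < e"
    using order_tendstoD(2)[OF assms] by (simp add: case_prod_beta)
  then obtain Q where "eventually Q at_top" "\<And>s t. Q s \<Longrightarrow> Q t \<Longrightarrow> d s t < e"
    unfolding eventually_prod_same by auto
  then show thesis using that unfolding eventually_at_top_linorder by metis
qed

locale rkhs_space =
  fixes D :: "complex set" and K :: "complex \<Rightarrow> complex \<Rightarrow> complex"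
    and H :: "(complex \<Rightarrow> complex) set"
    and ip :: "(complex \<Rightarrow> complex) \<Rightarrow> (complex \<Rightarrow> complex) \<Rightarrow> complex"
  assumes rkhs: "rkhs D K H ip"
begin

lemma
  shows vanishes_outside: "f \<in> H \<Longrightarrow> x \<notin> D \<Longrightarrow> f x = 0"
    and zero_mem: "(\<lambda>x. 0) \<in> H"
    and add_mem: "f \<in> H \<Longrightarrow> g \<in> H \<Longrightarrow> (\<lambda>x. f x + g x) \<in> H"
    and scale_mem: "f \<in> H \<Longrightarrow> (\<lambda>x. c * f x) \<in> H"
    and ip_add_left: "f \<in> H \<Longrightarrow> g \<in> H \<Longrightarrow> h \<in> H \<Longrightarrow> ip (\<lambda>x. f x + g x) h = ip f h + ip g h"
    and ip_scale_left: "f \<in> H \<Longrightarrow> g \<in> H \<Longrightarrow> ip (\<lambda>x. c * f x) g = c * ip f g"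
    and ip_swap: "f \<in> H \<Longrightarrow> g \<in> H \<Longrightarrow> ip g f = cnj (ip f g)"
    and ip_self_nonneg: "f \<in> H \<Longrightarrow> Im (ip f f) = 0 \<and> Re (ip f f) \<ge> 0"
    and ip_self_eq_0D: "f \<in> H \<Longrightarrow> ip f f = 0 \<Longrightarrow> f = (\<lambda>x. 0)"
    and complete: "(\<And>n. X n \<in> H) \<Longrightarrow>
          (\<forall>e>0. \<exists>N. \<forall>m\<ge>N. \<forall>n\<ge>N. hnorm ip (\<lambda>x. X m x - X n x) < e) \<Longrightarrow>
          \<exists>f\<in>H. (\<lambda>n. hnorm ip (\<lambda>x. X n x - f x)) \<longlonglongrightarrow> 0"
    and kfun_mem: "t \<in> D \<Longrightarrow> kfun D K t \<in> H"
    and reproducing: "t \<in> D \<Longrightarrow> f \<in> H \<Longrightarrow> ip f (kfun D K t) = f t"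
  using rkhs unfolding rkhs_def by blast+

lemma lincomb_mem: "f \<in> H \<Longrightarrow> g \<in> H \<Longrightarrow> (\<lambda>x. f x + c * g x) \<in> H"
  by (simp add: add_mem scale_mem)

lemma diff_mem: "f \<in> H \<Longrightarrow> g \<in> H \<Longrightarrow> (\<lambda>x. f x - g x) \<in> H"
  using lincomb_mem[of f g "-1"] by simp

lemma ip_lincomb_left:
  "f \<in> H \<Longrightarrow> g \<in> H \<Longrightarrow> h \<in> H \<Longrightarrow> ip (\<lambda>x. f x + c * g x) h = ip f h + c * ip g h"
  by (simp add: ip_add_left ip_scale_left scale_mem)

lemma ip_lincomb_right:
  assumes "f \<in> H" "g \<in> H" "h \<in> H"
  shows "ip h (\<lambda>x. f x + c * g x) = ip h f + cnj c * ip h g"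
  using ip_swap[OF lincomb_mem[OF assms(1,2)] assms(3)] ip_swap[OF assms(1,3)] ip_swap[OF assms(2,3)]
  by (simp add: ip_lincomb_left assms)

lemma ip_diff_left: "f \<in> H \<Longrightarrow> g \<in> H \<Longrightarrow> h \<in> H \<Longrightarrow> ip (\<lambda>x. f x - g x) h = ip f h - ip g h"
  using ip_lincomb_left[of f g h "-1"] by simp

lemma ip_diff_right: "f \<in> H \<Longrightarrow> g \<in> H \<Longrightarrow> h \<in> H \<Longrightarrow> ip h (\<lambda>x. f x - g x) = ip h f - ip h g"
  using ip_lincomb_right[of f g h "-1"] by simp

lemma ip_zero_left: "g \<in> H \<Longrightarrow> ip (\<lambda>x. 0) g = 0"
  using ip_scale_left[of g g 0] by simp

lemma hnorm_nonneg: "f \<in> H \<Longrightarrow> hnorm ip f \<ge> 0"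
  using ip_self_nonneg by (simp add: hnorm_def)

lemma hnorm_squared: "f \<in> H \<Longrightarrow> (hnorm ip f)\<^sup>2 = Re (ip f f)"
  using ip_self_nonneg[of f] by (simp add: hnorm_def)

lemma ip_self_eq_hnorm: "f \<in> H \<Longrightarrow> ip f f = of_real ((hnorm ip f)\<^sup>2)"
  using ip_self_nonneg[of f] by (simp add: hnorm_def complex_eq_iff)

lemma cauchy_schwarz:
  assumes f: "f \<in> H" and g: "g \<in> H"
  shows "cmod (ip f g) \<le> hnorm ip f * hnorm ip g"
proof (cases "hnorm ip g = 0")
  case True
  then have "g = (\<lambda>x. 0)" using ip_self_eq_0D ip_self_eq_hnorm g by simp
  then show ?thesis using ip_swap[OF f zero_mem] ip_zero_left[OF f] hnorm_nonneg f g by simp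
next
  case False
  define z where "z = ip f g"
  define c where "c = - z / of_real ((hnorm ip g)\<^sup>2)"
  have fcg: "(\<lambda>x. f x + c * g x) \<in> H" using lincomb_mem f g by blast
  have "ip (\<lambda>x. f x + c * g x) (\<lambda>x. f x + c * g x)
      = ip f f + cnj c * ip f g + c * (ip g f + cnj c * ip g g)"
    using ip_lincomb_left[OF f g fcg] ip_lincomb_right[OF f g f] ip_lincomb_right[OF f g g] by simp
  also have "\<dots> = of_real ((hnorm ip f)\<^sup>2 - (cmod z)\<^sup>2 / (hnorm ip g)\<^sup>2)"
    using False unfolding ip_swap[OF f g] ip_self_eq_hnorm[OF f] ip_self_eq_hnorm[OF g]
      z_def[symmetric] c_def
    by (simp add: field_simps flip: complex_norm_square)
  finally have "(cmod z)\<^sup>2 / (hnorm ip g)\<^sup>2 \<le> (hnorm ip f)\<^sup>2"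
    using ip_self_nonneg[OF fcg] by simp
  then have "(cmod z)\<^sup>2 \<le> (hnorm ip f * hnorm ip g)\<^sup>2"
    using False by (simp add: field_simps power_mult_distrib)
  then show ?thesis unfolding z_def by (rule power2_le_imp_le) (simp add: hnorm_nonneg f g)
qed

lemma hnorm_triangle:
  assumes f: "f \<in> H" and g: "g \<in> H"
  shows "hnorm ip (\<lambda>x. f x + g x) \<le> hnorm ip f + hnorm ip g"
proof -
  have fg: "(\<lambda>x. f x + g x) \<in> H" using add_mem f g by blast
  have "ip (\<lambda>x. f x + g x) (\<lambda>x. f x + g x) = ip f f + ip g g + 2 * of_real (Re (ip f g))"
    using ip_lincomb_left[OF f g fg, of 1] ip_lincomb_right[OF f g f, of 1]
      ip_lincomb_right[OF f g g, of 1] ip_swap[OF f g]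
    by (simp add: complex_add_cnj)
  then have "(hnorm ip (\<lambda>x. f x + g x))\<^sup>2 = (hnorm ip f)\<^sup>2 + (hnorm ip g)\<^sup>2 + 2 * Re (ip f g)"
    unfolding hnorm_squared[OF fg] hnorm_squared[OF f] hnorm_squared[OF g] by simp
  also have "\<dots> \<le> (hnorm ip f + hnorm ip g)\<^sup>2"
    using cauchy_schwarz[OF f g] complex_Re_le_cmod[of "ip f g"] by (simp add: power2_sum)
  finally show ?thesis by (rule power2_le_imp_le) (simp add: hnorm_nonneg f g)
qed

lemma hnorm_diff_triangle:
  assumes "f \<in> H" "g \<in> H" "h \<in> H"
  shows "hnorm ip (\<lambda>x. f x - h x) \<le> hnorm ip (\<lambda>x. f x - g x) + hnorm ip (\<lambda>x. g x - h x)"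
  using hnorm_triangle[OF diff_mem[OF assms(1,2)] diff_mem[OF assms(2,3)]] by simp

lemma ip_kfun_kfun: "s \<in> D \<Longrightarrow> t \<in> D \<Longrightarrow> ip (kfun D K t) (kfun D K s) = K s t"
  using reproducing[OF _ kfun_mem, of s t] by (simp add: kfun_def)

lemma ip_kfun_diff_self:
  assumes "s \<in> D" "t \<in> D"
  shows "ip (\<lambda>x. kfun D K s x - kfun D K t x) (\<lambda>x. kfun D K s x - kfun D K t x)
    = K s s - K t s - K s t + K t t"
  using assms
  by (simp add: ip_diff_left ip_diff_right diff_mem kfun_mem ip_kfun_kfun)

lemma tendsto_ip_left:
  assumes "\<forall>\<^sub>F x in F. X x \<in> H" "g \<in> H" "h \<in> H"
    and "((\<lambda>x. hnorm ip (\<lambda>w. X x w - g w)) \<longlongrightarrow> 0) F"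
  shows "((\<lambda>x. ip (X x) h) \<longlongrightarrow> ip g h) F"
proof -
  have "((\<lambda>x. ip (X x) h - ip g h) \<longlongrightarrow> 0) F"
  proof (rule Lim_null_comparison)
    show "\<forall>\<^sub>F x in F. cmod (ip (X x) h - ip g h) \<le> hnorm ip (\<lambda>w. X x w - g w) * hnorm ip h"
      using assms(1)
    proof eventually_elim
      case (elim x)
      then show ?case
        using cauchy_schwarz[OF diff_mem[OF elim assms(2)] assms(3)] ip_diff_left[OF elim assms(2,3)]
        by simp
    qed
    show "((\<lambda>x. hnorm ip (\<lambda>w. X x w - g w) * hnorm ip h) \<longlongrightarrow> 0) F"
      using tendsto_mult_left_zero[OF assms(4)] .
  qed
  then show ?thesis by (rule LIM_zero_cancel)
qed

lemma closed_subspace_orthogonal: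
  assumes g: "g \<in> H"
  shows "closed_subspace H ip {f \<in> H. ip f g = 0}"
  unfolding closed_subspace_def
proof (intro conjI ballI allI impI)
  show "{f \<in> H. ip f g = 0} \<subseteq> H" by blast
  show "(\<lambda>x. 0) \<in> {f \<in> H. ip f g = 0}" using zero_mem ip_zero_left[OF g] by blast
  show "(\<lambda>x. f x + h x) \<in> {f \<in> H. ip f g = 0}"
    if "f \<in> {f \<in> H. ip f g = 0}" "h \<in> {f \<in> H. ip f g = 0}" for f h
    using that add_mem ip_add_left[OF _ _ g] by simp
  show "(\<lambda>x. c * f x) \<in> {f \<in> H. ip f g = 0}" if "f \<in> {f \<in> H. ip f g = 0}" for f c
    using that scale_mem ip_scale_left[OF _ g] by simp
  fix Y f assume Y: "\<forall>n. Y n \<in> {f \<in> H. ip f g = 0}" and f: "f \<in> H"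
    and lim: "(\<lambda>n. hnorm ip (\<lambda>x. Y n x - f x)) \<longlonglongrightarrow> 0"
  have "(\<lambda>n. ip (Y n) g) \<longlonglongrightarrow> ip f g"
    by (rule tendsto_ip_left) (use Y f g lim in auto)
  moreover have "(\<lambda>n. ip (Y n) g) \<longlonglongrightarrow> 0" using Y by simp
  ultimately have "ip f g = 0" by (rule LIMSEQ_unique)
  then show "f \<in> {f \<in> H. ip f g = 0}" using f by simp
qed

lemma reproducing_kernel_orthogonal:
  assumes g: "g \<in> H" and "ip g g \<noteq> 0"
  shows "is_reproducing_kernel D {f \<in> H. ip f g = 0} ip (\<lambda>s u. K s u - g s * cnj (g u) / ip g g)"
  unfolding is_reproducing_kernel_def
proof (intro ballI conjI)
  fix u assume u: "u \<in> D"
  define c where "c = - cnj (g u) / ip g g"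
  have ku: "kfun D K u \<in> H" using kfun_mem u by blast
  have kfun_eq: "kfun D (\<lambda>s u. K s u - g s * cnj (g u) / ip g g) u = (\<lambda>x. kfun D K u x + c * g x)"
    by (rule ext) (simp add: kfun_def c_def vanishes_outside[OF g])
  have "ip (kfun D K u) g = cnj (g u)"
    using ip_swap[OF ku g] reproducing[OF u g] by simp
  then have "ip (\<lambda>x. kfun D K u x + c * g x) g = 0"
    unfolding ip_lincomb_left[OF ku g g] using assms by (simp add: c_def)
  then show "kfun D (\<lambda>s u. K s u - g s * cnj (g u) / ip g g) u \<in> {f \<in> H. ip f g = 0}"
    unfolding kfun_eq using lincomb_mem[OF ku g] by simp
  show "ip f (kfun D (\<lambda>s u. K s u - g s * cnj (g u) / ip g g) u) = f u"
    if "f \<in> {f \<in> H. ip f g = 0}" for f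
    unfolding kfun_eq using that ip_lincomb_right[OF ku g] reproducing[OF u] by simp
qed

lemma cauchy_at_top_tendsto_samples_limit:
  fixes X :: "real \<Rightarrow> complex \<Rightarrow> complex"
  assumes mem: "\<And>t. t \<ge> T0 \<Longrightarrow> X t \<in> H" and g: "g \<in> H"
    and cauchy: "((\<lambda>(s, t). hnorm ip (\<lambda>w. X s w - X t w)) \<longlongrightarrow> 0) (at_top \<times>\<^sub>F at_top)"
    and samples: "(\<lambda>n. hnorm ip (\<lambda>w. X (T0 + real n) w - g w)) \<longlonglongrightarrow> 0"
  shows "((\<lambda>t. hnorm ip (\<lambda>w. X t w - g w)) \<longlongrightarrow> 0) at_top"
proof (rule tendstoI)
  fix e :: real assume e: "e > 0"
  then obtain T where T: "\<And>s t. s \<ge> T \<Longrightarrow> t \<ge> T \<Longrightarrow> hnorm ip (\<lambda>w. X s w - X t w) < e/2"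
    using tendsto_prod_at_top_zeroE[OF cauchy, of "e/2"] by auto
  have "\<forall>\<^sub>F n in sequentially. hnorm ip (\<lambda>w. X (T0 + real n) w - g w) < e/2 \<and> T - T0 \<le> real n"
    using e samples filterlim_real_sequentially
    by (intro eventually_conj order_tendstoD(2)) (auto simp: filterlim_at_top)
  then obtain n where n: "hnorm ip (\<lambda>w. X (T0 + real n) w - g w) < e/2" "T - T0 \<le> real n"
    using eventually_happens'[OF sequentially_bot] by blast
  show "\<forall>\<^sub>F t in at_top. dist (hnorm ip (\<lambda>w. X t w - g w)) 0 < e"
    using eventually_ge_at_top[of "max T T0"]
  proof eventually_elim
    case (elim t)
    then have Xt: "X t \<in> H" using mem by simp
    have "hnorm ip (\<lambda>w. X t w - g w)
        \<le> hnorm ip (\<lambda>w. X t w - X (T0 + real n) w) + hnorm ip (\<lambda>w. X (T0 + real n) w - g w)"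
      by (rule hnorm_diff_triangle[OF Xt mem g]) simp
    also have "\<dots> < e" using T[of t "T0 + real n"] elim n by simp
    finally show ?case using hnorm_nonneg[OF diff_mem[OF Xt g]] by simp
  qed
qed

lemma cauchy_at_top_imp_convergent:
  fixes X :: "real \<Rightarrow> complex \<Rightarrow> complex"
  assumes mem: "\<forall>\<^sub>F t in at_top. X t \<in> H"
    and cauchy: "((\<lambda>(s, t). hnorm ip (\<lambda>w. X s w - X t w)) \<longlongrightarrow> 0) (at_top \<times>\<^sub>F at_top)"
  obtains g where "g \<in> H" "((\<lambda>t. hnorm ip (\<lambda>w. X t w - g w)) \<longlongrightarrow> 0) at_top"
proof -
  obtain T0 where T0: "\<And>t. t \<ge> T0 \<Longrightarrow> X t \<in> H"
    using mem unfolding eventually_at_top_linorder by blast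
  have "X (T0 + real n) \<in> H" for n by (rule T0) simp
  then have "\<exists>g\<in>H. (\<lambda>n. hnorm ip (\<lambda>w. X (T0 + real n) w - g w)) \<longlonglongrightarrow> 0"
  proof (rule complete[of "\<lambda>n. X (T0 + real n)"], intro allI impI)
    fix e :: real assume "e > 0"
    then obtain T where T: "\<And>s t. s \<ge> T \<Longrightarrow> t \<ge> T \<Longrightarrow> hnorm ip (\<lambda>w. X s w - X t w) < e"
      using tendsto_prod_at_top_zeroE[OF cauchy] by blast
    show "\<exists>N. \<forall>m\<ge>N. \<forall>n\<ge>N. hnorm ip (\<lambda>w. X (T0 + real m) w - X (T0 + real n) w) < e"
    proof (intro exI allI impI)
      fix m n assume "m \<ge> nat \<lceil>T - T0\<rceil>" "n \<ge> nat \<lceil>T - T0\<rceil>"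
      then have "T0 + real m \<ge> T" "T0 + real n \<ge> T" by linarith+
      then show "hnorm ip (\<lambda>w. X (T0 + real m) w - X (T0 + real n) w) < e" by (rule T)
    qed
  qed
  then obtain g where "g \<in> H" "(\<lambda>n. hnorm ip (\<lambda>w. X (T0 + real n) w - g w)) \<longlonglongrightarrow> 0"
    by blast
  then show thesis using cauchy_at_top_tendsto_samples_limit[OF T0 _ cauchy] that by blast
qed

lemma kfun_convergent_at_top:
  assumes reals_in_D: "\<forall>\<^sub>F t in at_top. of_real t \<in> D"
    and K_lim: "((\<lambda>(x, y). K (of_real x) (of_real y)) \<longlongrightarrow> L) (at_top \<times>\<^sub>F at_top)"
  obtains g where "g \<in> H" "((\<lambda>t. hnorm ip (\<lambda>w. kfun D K (of_real t) w - g w)) \<longlongrightarrow> 0) at_top"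
proof -
  let ?k = "\<lambda>x y. K (of_real x) (of_real y)"
  have K_lim': "((\<lambda>p. ?k (fst p) (snd p)) \<longlongrightarrow> L) (at_top \<times>\<^sub>F at_top)"
    using K_lim by (simp add: split_beta')
  have K_pairs: "((\<lambda>p. ?k (f p) (g p)) \<longlongrightarrow> L) (at_top \<times>\<^sub>F at_top)"
    if "filterlim f at_top (at_top \<times>\<^sub>F at_top)" "filterlim g at_top (at_top \<times>\<^sub>F at_top)"
    for f g :: "real \<times> real \<Rightarrow> real"
    using filterlim_compose[OF K_lim' filterlim_Pair[OF that]] by simp
  have "((\<lambda>p. ?k (fst p) (fst p) - ?k (snd p) (fst p) - ?k (fst p) (snd p) + ?k (snd p) (snd p))
      \<longlongrightarrow> L - L - L + L) (at_top \<times>\<^sub>F at_top)"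
    by (intro tendsto_add tendsto_diff K_pairs filterlim_fst filterlim_snd)
  then have "((\<lambda>p. sqrt (Re (?k (fst p) (fst p) - ?k (snd p) (fst p) - ?k (fst p) (snd p)
      + ?k (snd p) (snd p)))) \<longlongrightarrow> 0) (at_top \<times>\<^sub>F at_top)"
    using tendsto_real_sqrt[OF tendsto_Re] by fastforce
  moreover have "\<forall>\<^sub>F p in at_top \<times>\<^sub>F at_top. sqrt (Re (?k (fst p) (fst p) - ?k (snd p) (fst p)
      - ?k (fst p) (snd p) + ?k (snd p) (snd p)))
      = hnorm ip (\<lambda>w. kfun D K (of_real (fst p)) w - kfun D K (of_real (snd p)) w)"
    using eventually_prodI[OF reals_in_D reals_in_D]
    by eventually_elim (simp add: hnorm_def ip_kfun_diff_self)
  ultimately have cauchy: "((\<lambda>(s, t). hnorm ip (\<lambda>w. kfun D K (of_real s) w - kfun D K (of_real t) w))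
      \<longlongrightarrow> 0) (at_top \<times>\<^sub>F at_top)"
    unfolding case_prod_beta by (rule Lim_transform_eventually)
  have mem: "\<forall>\<^sub>F t in at_top. kfun D K (of_real t) \<in> H"
    using reals_in_D by eventually_elim (rule kfun_mem)
  show thesis by (rule cauchy_at_top_imp_convergent[OF mem cauchy that])
qed

context
  fixes g :: "complex \<Rightarrow> complex"
  assumes g_mem: "g \<in> H"
    and reals_in_D: "\<forall>\<^sub>F t in at_top. of_real t \<in> D"
    and kfun_tendsto: "((\<lambda>t. hnorm ip (\<lambda>w. kfun D K (of_real t) w - g w)) \<longlongrightarrow> 0) at_top"
begin

lemma tendsto_ip_kfun_left: "h \<in> H \<Longrightarrow> ((\<lambda>t. ip (kfun D K (of_real t)) h) \<longlongrightarrow> ip g h) at_top"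
  by (rule tendsto_ip_left[OF _ g_mem _ kfun_tendsto])
    (use reals_in_D in \<open>auto elim!: eventually_mono intro: kfun_mem\<close>)

lemma tendsto_eval_at_top:
  assumes f: "f \<in> H"
  shows "((\<lambda>t. f (of_real t)) \<longlongrightarrow> ip f g) at_top"
proof -
  have "((\<lambda>t. cnj (ip (kfun D K (of_real t)) f)) \<longlongrightarrow> cnj (ip g f)) at_top"
    by (intro tendsto_cnj tendsto_ip_kfun_left f)
  moreover have "\<forall>\<^sub>F t in at_top. cnj (ip (kfun D K (of_real t)) f) = f (of_real t)"
    using reals_in_D by eventually_elim (simp add: ip_swap[OF f] kfun_mem reproducing f)
  ultimately show ?thesis
    unfolding ip_swap[OF g_mem f] by (rule Lim_transform_eventually)
qed

lemma H_inf_eq_orthogonal: "H_inf H = {f \<in> H. ip f g = 0}"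
proof -
  have "((\<lambda>x. f (of_real x)) \<longlongrightarrow> 0) at_top \<longleftrightarrow> ip f g = 0" if "f \<in> H" for f
    using tendsto_eval_at_top[OF that] tendsto_unique[OF trivial_limit_at_top_linorder] by metis
  then show ?thesis unfolding H_inf_def by blast
qed

lemma lim_right_eq:
  assumes s: "s \<in> D"
  shows "lim_right K s = g s"
proof -
  have "((\<lambda>r. ip (kfun D K (of_real r)) (kfun D K s)) \<longlongrightarrow> g s) at_top"
    using tendsto_ip_kfun_left[OF kfun_mem[OF s]] reproducing[OF s g_mem] by simp
  moreover have "\<forall>\<^sub>F r in at_top. ip (kfun D K (of_real r)) (kfun D K s) = K s (of_real r)"
    using reals_in_D by eventually_elim (rule ip_kfun_kfun[OF s])
  ultimately show ?thesis
    unfolding lim_right_def by (rule tendsto_Lim[OF trivial_limit_at_top_linorder Lim_transform_eventually])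
qed

lemma lim_left_eq:
  assumes u: "u \<in> D"
  shows "lim_left K u = cnj (g u)"
proof -
  have "((\<lambda>t. kfun D K u (of_real t)) \<longlongrightarrow> cnj (g u)) at_top"
    using tendsto_eval_at_top[OF kfun_mem[OF u]] ip_swap[OF kfun_mem[OF u] g_mem] reproducing[OF u g_mem]
    by simp
  moreover have "\<forall>\<^sub>F t in at_top. kfun D K u (of_real t) = K (of_real t) u"
    using reals_in_D by eventually_elim (simp add: kfun_def)
  ultimately show ?thesis
    unfolding lim_left_def by (rule tendsto_Lim[OF trivial_limit_at_top_linorder Lim_transform_eventually])
qed

lemma lim_both_eq: "lim_both K = ip g g"
proof -
  have "\<forall>\<^sub>F t in at_top. g (of_real t) = lim_right K (of_real t)"
    using reals_in_D by eventually_elim (simp add: lim_right_eq)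
  with tendsto_eval_at_top[OF g_mem] show ?thesis
    unfolding lim_both_def by (rule tendsto_Lim[OF trivial_limit_at_top_linorder Lim_transform_eventually])
qed

end

theorem H_inf_closed_subspace_and_kernel:
  assumes reals_in_D: "\<forall>\<^sub>F t in at_top. of_real t \<in> D"
    and K_lim: "((\<lambda>(x, y). K (of_real x) (of_real y)) \<longlongrightarrow> L) (at_top \<times>\<^sub>F at_top)"
  shows "closed_subspace H ip (H_inf H) \<and>
    (lim_both K \<noteq> 0 \<longrightarrow>
      is_reproducing_kernel D (H_inf H) ip (\<lambda>s u. K s u - lim_right K s * lim_left K u / lim_both K))"
proof -
  obtain g where g: "g \<in> H" and lim: "((\<lambda>t. hnorm ip (\<lambda>w. kfun D K (of_real t) w - g w)) \<longlongrightarrow> 0) at_top"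
    using kfun_convergent_at_top[OF reals_in_D K_lim] .
  note H_inf = H_inf_eq_orthogonal[OF g reals_in_D lim]
  have "is_reproducing_kernel D (H_inf H) ip (\<lambda>s u. K s u - lim_right K s * lim_left K u / lim_both K)"
    if "lim_both K \<noteq> 0"
  proof -
    have "ip g g \<noteq> 0" using that lim_both_eq[OF g reals_in_D lim] by simp
    then have "is_reproducing_kernel D (H_inf H) ip (\<lambda>s u. K s u - g s * cnj (g u) / ip g g)"
      unfolding H_inf by (rule reproducing_kernel_orthogonal[OF g])
    then show ?thesis
      by (rule is_reproducing_kernel_cong)
        (simp add: lim_right_eq[OF g reals_in_D lim] lim_left_eq[OF g reals_in_D lim]
          lim_both_eq[OF g reals_in_D lim])
  qed
  then show ?thesis using closed_subspace_orthogonal[OF g] H_inf by simp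
qed

end

lemma dpsum_double_difference:
  "dpsum a s u (Suc p, Suc q) - dpsum a s u (p, Suc q) - dpsum a s u (Suc p, q) + dpsum a s u (p, q)
    = a (Suc p) (Suc q) * of_nat (Suc p) powr (-s) * of_nat (Suc q) powr (-u)"
  unfolding dpsum_def by (simp add: sum.cl_ivl_Suc sum.distrib algebra_simps)

lemma dpsum_tendsto_imp_corner_bounded:
  assumes L: "(dpsum a s u \<longlongrightarrow> L) (sequentially \<times>\<^sub>F sequentially)"
  obtains N where "\<And>p q. p \<ge> N \<Longrightarrow> q \<ge> N \<Longrightarrow>
    cmod (a (Suc p) (Suc q) * of_nat (Suc p) powr (-s) * of_nat (Suc q) powr (-u)) \<le> 2"
proof -
  have "\<forall>\<^sub>F p in sequentially \<times>\<^sub>F sequentially. cmod (dpsum a s u p - L) < 1/2"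
    using tendsto_iff[THEN iffD1, OF L, rule_format, of "1/2"] by (simp add: dist_norm)
  then obtain N where N: "\<And>p q. p \<ge> N \<Longrightarrow> q \<ge> N \<Longrightarrow> cmod (dpsum a s u (p, q) - L) < 1/2"
    unfolding eventually_prod_sequentially by blast
  define d where "d p q = dpsum a s u (p, q) - L" for p q
  have "cmod (a (Suc p) (Suc q) * of_nat (Suc p) powr (-s) * of_nat (Suc q) powr (-u)) \<le> 2"
    if "p \<ge> N" "q \<ge> N" for p q
  proof -
    have "a (Suc p) (Suc q) * of_nat (Suc p) powr (-s) * of_nat (Suc q) powr (-u)
        = d (Suc p) (Suc q) - d p (Suc q) - d (Suc p) q + d p q"
      unfolding d_def dpsum_double_difference[symmetric] by simp
    also have "cmod \<dots> \<le> cmod (d (Suc p) (Suc q)) + cmod (d p (Suc q)) + cmod (d (Suc p) q) + cmod (d p q)"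
      using norm_triangle_ineq[of "d (Suc p) (Suc q) - d p (Suc q) - d (Suc p) q" "d p q"]
        norm_triangle_ineq4[of "d (Suc p) (Suc q) - d p (Suc q)" "d (Suc p) q"]
        norm_triangle_ineq4[of "d (Suc p) (Suc q)" "d p (Suc q)"]
      by linarith
    also have "\<dots> \<le> 2"
      using N[of "Suc p" "Suc q"] N[of p "Suc q"] N[of "Suc p" q] N[of p q] that unfolding d_def by simp
    finally show ?thesis .
  qed
  then show thesis by (rule that)
qed

lemma regularly_convergent_on_terms_bounded:
  assumes conv: "regularly_convergent_on a D" and "s \<in> D" "u \<in> D"
  obtains C where
    "\<And>m n. m \<ge> 1 \<Longrightarrow> n \<ge> 1 \<Longrightarrow> cmod (a m n * of_nat m powr (-s) * of_nat n powr (-u)) \<le> C"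
proof -
  define b where "b m n = a m n * of_nat m powr (-s) * of_nat n powr (-u)" for m n
  have "(\<exists>L. (dpsum a s u \<longlongrightarrow> L) (sequentially \<times>\<^sub>F sequentially))
      \<and> (\<forall>m\<ge>1. summable (\<lambda>n. b m (Suc n))) \<and> (\<forall>n\<ge>1. summable (\<lambda>m. b (Suc m) n))"
    using conv[unfolded regularly_convergent_on_def, rule_format, OF assms(2,3)] unfolding b_def .
  then obtain L where L: "(dpsum a s u \<longlongrightarrow> L) (sequentially \<times>\<^sub>F sequentially)"
    and rows: "\<And>m. m \<ge> 1 \<Longrightarrow> summable (\<lambda>n. b m (Suc n))"
    and cols: "\<And>n. n \<ge> 1 \<Longrightarrow> summable (\<lambda>m. b (Suc m) n)"
    by blast
  obtain N where corner: "\<And>p q. p \<ge> N \<Longrightarrow> q \<ge> N \<Longrightarrow> cmod (b (Suc p) (Suc q)) \<le> 2"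
    using dpsum_tendsto_imp_corner_bounded[OF L] unfolding b_def by blast
  have bounded_rows: "bounded (range (\<lambda>n. b m (Suc n)))" if "m \<ge> 1" for m
    using convergent_imp_Bseq[OF convergentI[OF summable_LIMSEQ_zero[OF rows[OF that]]]]
    by (simp add: Bseq_eq_bounded)
  have bounded_cols: "bounded (range (\<lambda>m. b (Suc m) n))" if "n \<ge> 1" for n
    using convergent_imp_Bseq[OF convergentI[OF summable_LIMSEQ_zero[OF cols[OF that]]]]
    by (simp add: Bseq_eq_bounded)
  define B where "B = cball 0 2 \<union> (\<Union>m\<in>{1..N}. range (\<lambda>n. b m (Suc n)))
    \<union> (\<Union>n\<in>{1..N}. range (\<lambda>m. b (Suc m) n))"
  have "bounded B" unfolding B_def using bounded_rows bounded_cols by auto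
  then obtain C where C: "\<And>z. z \<in> B \<Longrightarrow> cmod z \<le> C" unfolding bounded_iff by blast
  have "b m n \<in> B" if mn: "m \<ge> 1" "n \<ge> 1" for m n
  proof -
    obtain p q where pq: "m = Suc p" "n = Suc q" using mn by (cases m; cases n) auto
    consider "m \<le> N" | "n \<le> N" | "p \<ge> N" "q \<ge> N" using pq by (cases "m \<le> N"; cases "n \<le> N") auto
    then show ?thesis
    proof cases
      case 1
      have "b m n \<in> range (\<lambda>n. b m (Suc n))" using pq by simp
      then have "b m n \<in> (\<Union>m\<in>{1..N}. range (\<lambda>n. b m (Suc n)))" using 1 mn by (intro UN_I[of m]) auto
      then show ?thesis unfolding B_def by blast
    next
      case 2
      have "b m n \<in> range (\<lambda>m. b (Suc m) n)" using pq by simp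
      then have "b m n \<in> (\<Union>n\<in>{1..N}. range (\<lambda>m. b (Suc m) n))" using 2 mn by (intro UN_I[of n]) auto
      then show ?thesis unfolding B_def by blast
    next
      case 3
      then show ?thesis using corner unfolding B_def pq by simp
    qed
  qed
  with C show thesis by (intro that[of C]) (simp add: b_def)
qed

lemma sum_powr_le:
  fixes w :: real
  assumes w: "w \<ge> 2"
  shows "(\<Sum>m=1..M. real m powr (-w)) \<le> 1 + 2 powr (2 - w) * (\<Sum>n. inverse (real n ^ 2))"
proof (cases "M = 0")
  case True
  then show ?thesis
    using suminf_nonneg[OF inverse_power_summable[of 2, where 'a=real]] by simp
next
  case False
  have term_le: "real m powr (-w) \<le> 2 powr (2 - w) * inverse (real m ^ 2)" if "m \<ge> 2" for m
  proof -
    have "real m powr (-w) = real m powr (2 - w) * inverse (real m ^ 2)"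
      using that by (simp add: powr_minus powr_diff powr_realpow field_simps)
    also have "\<dots> \<le> 2 powr (2 - w) * inverse (real m ^ 2)"
      using that w by (intro mult_right_mono powr_mono2') auto
    finally show ?thesis .
  qed
  have "(\<Sum>m=1..M. real m powr (-w)) = 1 + (\<Sum>m=2..M. real m powr (-w))"
    using False by (simp add: sum.atLeast_Suc_atMost numeral_2_eq_2)
  also have "(\<Sum>m=2..M. real m powr (-w)) \<le> 2 powr (2 - w) * (\<Sum>m=2..M. inverse (real m ^ 2))"
    unfolding sum_distrib_left by (intro sum_mono term_le) simp
  also have "(\<Sum>m=2..M. inverse (real m ^ 2)) \<le> (\<Sum>n. inverse (real n ^ 2))"
    by (intro sum_le_suminf inverse_power_summable) auto
  finally show ?thesis by simp
qed

lemma dpsum_minus_first_term_le: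
  fixes s0 x y :: real
  assumes C: "\<And>m n. m \<ge> 1 \<Longrightarrow> n \<ge> 1 \<Longrightarrow>
      cmod (a m n * of_nat m powr (- of_real s0) * of_nat n powr (- of_real s0)) \<le> C"
    and MN: "M \<ge> 1" "N \<ge> 1"
  shows "cmod (dpsum a (of_real x) (of_real y) (M, N) - a 1 1)
    \<le> C * ((\<Sum>m=1..M. real m powr (s0 - x)) * (\<Sum>n=1..N. real n powr (s0 - y)) - 1)"
proof -
  define t where "t p = a (fst p) (snd p) * of_nat (fst p) powr (- of_real x)
    * of_nat (snd p) powr (- of_real y)" for p
  define v where "v p = real (fst p) powr (s0 - x) * real (snd p) powr (s0 - y)" for p
  define R where "R = {1..M} \<times> {1..N}"
  have R: "finite R" "(1, 1) \<in> R" using MN unfolding R_def by auto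
  have t_le: "cmod (t p) \<le> C * v p" if "p \<in> R" for p
  proof -
    have "of_nat k powr (- complex_of_real z) = of_real (real k powr (-s0) * real k powr (s0 - z))"
      for k :: nat and z
      using powr_of_real[of "real k" "-z"] by (simp flip: powr_add)
    then have "cmod (t p) = cmod (a (fst p) (snd p) * of_nat (fst p) powr (- of_real s0)
        * of_nat (snd p) powr (- of_real s0)) * v p"
      unfolding t_def v_def by (simp add: norm_mult powr_of_real)
    also have "\<dots> \<le> C * v p"
      using C that unfolding R_def by (intro mult_right_mono) (auto simp: v_def)
    finally show ?thesis .
  qed
  have "dpsum a (of_real x) (of_real y) (M, N) - a 1 1 = sum t (R - {(1, 1)})"
    using sum.remove[OF R, of t]
    by (simp add: dpsum_def R_def t_def sum.cartesian_product case_prod_beta)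
  then have "cmod (dpsum a (of_real x) (of_real y) (M, N) - a 1 1) \<le> (\<Sum>p\<in>R - {(1, 1)}. C * v p)"
    using t_le by (auto intro: sum_norm_le)
  also have "\<dots> = C * (sum v R - 1)"
    using sum.remove[OF R, of v] by (simp add: sum_distrib_left v_def algebra_simps)
  also have "sum v R = (\<Sum>m=1..M. real m powr (s0 - x)) * (\<Sum>n=1..N. real n powr (s0 - y))"
    unfolding R_def v_def by (simp add: sum.cartesian_product case_prod_beta sum_product)
  finally show ?thesis .
qed

lemma dir_kernel_minus_first_term_le:
  fixes s0 x y :: real
  assumes conv: "regularly_convergent_on a D" and xy_in_D: "of_real x \<in> D" "of_real y \<in> D"
    and C: "\<And>m n. m \<ge> 1 \<Longrightarrow> n \<ge> 1 \<Longrightarrow>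
      cmod (a m n * of_nat m powr (- of_real s0) * of_nat n powr (- of_real s0)) \<le> C"
    and xy: "x \<ge> s0 + 2" "y \<ge> s0 + 2"
  shows "cmod (dir_kernel a (of_real x) (of_real y) - a 1 1)
    \<le> C * ((1 + 2 powr (2 - (x - s0)) * (\<Sum>n. inverse (real n ^ 2)))
          * (1 + 2 powr (2 - (y - s0)) * (\<Sum>n. inverse (real n ^ 2))) - 1)"
    (is "_ \<le> C * (?X * ?Y - 1)")
proof -
  have nontrivial: "sequentially \<times>\<^sub>F sequentially \<noteq> (bot :: (nat \<times> nat) filter)"
    by (simp add: prod_filter_eq_bot)
  obtain L where L: "(dpsum a (of_real x) (of_real y) \<longlongrightarrow> L) (sequentially \<times>\<^sub>F sequentially)"
    using conv xy_in_D unfolding regularly_convergent_on_def by blast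
  have "dir_kernel a (of_real x) (of_real y) = L"
    unfolding dir_kernel_def using tendsto_Lim[OF nontrivial L] by simp
  moreover have "cmod (L - a 1 1) \<le> C * (?X * ?Y - 1)"
  proof (rule tendsto_upperbound[OF tendsto_norm[OF tendsto_diff[OF L tendsto_const]] _ nontrivial])
    have "C \<ge> 0" using C[of 1 1] norm_ge_zero order_trans by blast
    have "cmod (dpsum a (of_real x) (of_real y) (M, N) - a 1 1) \<le> C * (?X * ?Y - 1)"
      if "M \<ge> 1" "N \<ge> 1" for M N
    proof -
      have "cmod (dpsum a (of_real x) (of_real y) (M, N) - a 1 1)
        \<le> C * ((\<Sum>m=1..M. real m powr (s0 - x)) * (\<Sum>n=1..N. real n powr (s0 - y)) - 1)"
        by (rule dpsum_minus_first_term_le[OF C that])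
      also have "\<dots> \<le> C * (?X * ?Y - 1)"
        using sum_powr_le[of "x - s0" M] sum_powr_le[of "y - s0" N] xy \<open>C \<ge> 0\<close>
          suminf_nonneg[OF inverse_power_summable[of 2, where 'a=real]]
        by (intro mult_left_mono diff_right_mono mult_mono) (auto intro: sum_nonneg)
      finally show ?thesis .
    qed
    then show "\<forall>\<^sub>F p in sequentially \<times>\<^sub>F sequentially. cmod (dpsum a (of_real x) (of_real y) p - a 1 1)
        \<le> C * (?X * ?Y - 1)"
      unfolding eventually_prod_sequentially by (intro exI[of _ 1]) auto
  qed
  ultimately show ?thesis by simp
qed

lemma dir_kernel_tendsto_first_coeff:
  assumes "dirichlet_kernel_on \<rho> a"
  shows "((\<lambda>(x, y). dir_kernel a (of_real x) (of_real y)) \<longlongrightarrow> a 1 1) (at_top \<times>\<^sub>F at_top)"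
proof -
  have conv: "regularly_convergent_on a (halfplane \<rho>)"
    using assms unfolding dirichlet_kernel_on_def .
  define s0 where "s0 = \<rho> + 1"
  have s0_in: "of_real s0 \<in> halfplane \<rho>" unfolding halfplane_def s0_def by simp
  obtain C where C: "\<And>m n. m \<ge> 1 \<Longrightarrow> n \<ge> 1 \<Longrightarrow>
      cmod (a m n * of_nat m powr (- of_real s0) * of_nat n powr (- of_real s0)) \<le> C"
    using regularly_convergent_on_terms_bounded[OF conv s0_in s0_in] by blast
  define S where "S = (\<Sum>n. inverse (real n ^ 2))"
  define W where "W w = 1 + 2 powr (2 - (w - s0)) * S" for w
  have "((\<lambda>w. 2 powr (2 - (w - s0))) \<longlongrightarrow> 0) at_top" by real_asymp
  then have "((\<lambda>w. 1 + 2 powr (2 - (w - s0)) * S) \<longlongrightarrow> 1 + 0 * S) at_top"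
    by (rule tendsto_add[OF tendsto_const tendsto_mult[OF _ tendsto_const]])
  then have W_lim: "(W \<longlongrightarrow> 1) at_top" unfolding W_def by simp
  have "((\<lambda>p. C * (W (fst p) * W (snd p) - 1)) \<longlongrightarrow> C * (1 * 1 - 1)) (at_top \<times>\<^sub>F at_top)"
    using filterlim_compose[OF W_lim filterlim_fst] filterlim_compose[OF W_lim filterlim_snd]
    by (intro tendsto_mult tendsto_diff tendsto_const)
  then have bound_lim: "((\<lambda>p. C * (W (fst p) * W (snd p) - 1)) \<longlongrightarrow> 0) (at_top \<times>\<^sub>F at_top)"
    by simp
  have bound: "\<forall>\<^sub>F p in at_top \<times>\<^sub>F at_top.
      cmod (dir_kernel a (of_real (fst p)) (of_real (snd p)) - a 1 1) \<le> C * (W (fst p) * W (snd p) - 1)"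
    using eventually_prodI[OF eventually_ge_at_top[of "s0 + 2"] eventually_ge_at_top[of "s0 + 2"]]
  proof eventually_elim
    case (elim p)
    then have "of_real (fst p) \<in> halfplane \<rho>" "of_real (snd p) \<in> halfplane \<rho>"
      unfolding halfplane_def s0_def by auto
    then show ?case
      unfolding W_def S_def by (rule dir_kernel_minus_first_term_le[OF conv _ _ C]) (use elim in auto)
  qed
  have "((\<lambda>p. dir_kernel a (of_real (fst p)) (of_real (snd p)) - a 1 1) \<longlongrightarrow> 0) (at_top \<times>\<^sub>F at_top)"
    by (rule Lim_null_comparison[OF bound bound_lim])
  then show ?thesis unfolding split_beta' by (rule LIM_zero_cancel)
qed

theorem corollary2p7:
  fixes \<rho> :: real and a :: "nat \<Rightarrow> nat \<Rightarrow> complex"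
    and H :: "(complex \<Rightarrow> complex) set"
    and ip :: "(complex \<Rightarrow> complex) \<Rightarrow> (complex \<Rightarrow> complex) \<Rightarrow> complex"
  assumes "dirichlet_kernel_on \<rho> a"
    and "psd_kernel (halfplane \<rho>) (dir_kernel a)"
    and "rkhs (halfplane \<rho>) (dir_kernel a) H ip"
  shows "closed_subspace H ip (H_inf H) \<and>
         (lim_both (dir_kernel a) \<noteq> 0 \<longrightarrow>
         is_reproducing_kernel (halfplane \<rho>) (H_inf H) ip
           (\<lambda>s u. dir_kernel a s u
                  - lim_right (dir_kernel a) s * lim_left (dir_kernel a) u / lim_both (dir_kernel a)))"
proof -
  interpret rkhs_space "halfplane \<rho>" "dir_kernel a" H ip
    using assms(3) by unfold_locales
  have "\<forall>\<^sub>F t in at_top. of_real t \<in> halfplane \<rho>"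
    unfolding halfplane_def using eventually_gt_at_top[of \<rho>] by simp
  then show ?thesis
    by (rule H_inf_closed_subspace_and_kernel[OF _ dir_kernel_tendsto_first_coeff[OF assms(1)]])
qed

end
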